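(* There exists a $(\mathbb{Z}_{40},[1,3,9,27],20)$ Hadamard partitioned difference family in the cyclic group $\mathbb{Z}_{40}$.
   Context: For $B\subseteq\mathbb{Z}_{40}$, $\Delta B$ is the multiset $\{x-y: x,y\in B, x\neq y\}$; for $\mathcal{F}=\{B_1,\dots,B_t\}$, $\Delta\mathcal{F}$ is the multiset union of the $\Delta B_i$. $\mathcal{F}$ is a $(G,[k_1,\dots,k_t],\lambda)$ partitioned difference family if the $B_i$ partition $G$, $|B_i|=k_i$, and $\Delta\mathcal{F}$ contains every non-zero element of $G$ exactly $\lambda$ times; it is Hadamard if $|G|=2\lambda$. *)

theory Defs
  imports Main "HOL-Library.Numeral_Type" "HOL-Library.Multiset"
begin

text \<open>The cyclic group Z_40 is rendered as the numeral type 40 (integers mod 40),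
  used as an additive group.\<close>

definition diff_mset :: "'a::ab_group_add set \<Rightarrow> 'a multiset" where
  "diff_mset B = image_mset (\<lambda>(x, y). x - y) (mset_set {(x, y). x \<in> B \<and> y \<in> B \<and> x \<noteq> y})"

definition family_diff :: "'a::ab_group_add set list \<Rightarrow> 'a multiset" where
  "family_diff Bs = sum_list (map diff_mset Bs)"

definition is_PDF :: "'a::{finite, ab_group_add} set list \<Rightarrow> nat list \<Rightarrow> nat \<Rightarrow> bool" where
  "is_PDF Bs ks lam \<longleftrightarrow>
     length Bs = length ks \<and>
     (\<forall>i < length Bs. card (Bs ! i) = ks ! i) \<and>
     (\<forall>i < length Bs. \<forall>j < length Bs. i \<noteq> j \<longrightarrow> Bs ! i \<inter> Bs ! j = {}) \<and>
     \<Union> (set Bs) = UNIV \<and>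
     (\<forall>g. g \<noteq> 0 \<longrightarrow> count (family_diff Bs) g = lam)"

definition is_Hadamard_PDF :: "'a::{finite, ab_group_add} set list \<Rightarrow> nat list \<Rightarrow> nat \<Rightarrow> bool" where
  "is_Hadamard_PDF Bs ks lam \<longleftrightarrow> is_PDF Bs ks lam \<and> CARD('a) = 2 * lam"

end

theory Submission
  imports Defs
begin

(* A difference x - y = g with x \<noteq> y in a block B is determined by x, so g occurs
   |{x \<in> B. x - g \<in> B}| times in \<Delta>B. Reading Z_40 as residues 0, ..., 39, all conditions on
   a candidate family (block sizes, disjointness, covering, and the 39 difference counts)
   become a finite computation on integers, which the blocks {0}, {10, 20, 30},
   {1, 2, 9, 13, 15, 16, 18, 24, 37} and the remaining 27 residues pass. *)

lemma count_diff_mset: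
  fixes B :: "'a::ab_group_add set"
  assumes "finite B" and "g \<noteq> 0"
  shows "count (diff_mset B) g = card {x \<in> B. x - g \<in> B}"
proof -
  let ?pairs = "{(x, y). x \<in> B \<and> y \<in> B \<and> x \<noteq> y}"
  have "finite ?pairs"
    using assms(1) by (auto intro: finite_subset[of _ "B \<times> B"])
  then have "count (diff_mset B) g = card {p \<in> ?pairs. fst p - snd p = g}"
    unfolding diff_mset_def count_image_mset
    by (simp add: vimage_def Int_def case_prod_beta conj_commute)
  also have "{p \<in> ?pairs. fst p - snd p = g} = (\<lambda>x. (x, x - g)) ` {x \<in> B. x - g \<in> B}"
    using assms(2) by (auto simp: image_iff algebra_simps)
  also have "card \<dots> = card {x \<in> B. x - g \<in> B}"
    by (rule card_image) (auto simp: inj_on_def)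
  finally show ?thesis .
qed

lemma count_family_diff:
  "count (family_diff Bs) g = (\<Sum>B\<leftarrow>Bs. count (diff_mset B) g)"
  unfolding family_diff_def by (induction Bs) auto

context mod_ring
begin

lemma of_int_eq_iff_mod: "(of_int a :: 'a) = of_int b \<longleftrightarrow> a mod n = b mod n"
  by (simp add: of_int_eq Rep_inject_sym Rep_Abs_mod)

lemma inj_on_of_int: "inj_on (of_int :: int \<Rightarrow> 'a) {0..<n}"
  by (rule inj_onI) (simp add: of_int_eq_iff_mod)

lemma of_int_image_eq_UNIV: "(of_int ` {0..<n} :: 'a set) = UNIV"
proof -
  have "x \<in> of_int ` {0..<n}" for x :: 'a
    by (rule cases[of x]) auto
  then show ?thesis
    by blast
qed

lemma of_int_mem_image_iff:
  assumes "S \<subseteq> {0..<n}"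
  shows "(of_int c :: 'a) \<in> of_int ` S \<longleftrightarrow> c mod n \<in> S"
proof
  assume "(of_int c :: 'a) \<in> of_int ` S"
  then obtain s where "s \<in> S" and "(of_int c :: 'a) = of_int s"
    by blast
  moreover have "s mod n = s"
    using \<open>s \<in> S\<close> assms by auto
  ultimately show "c mod n \<in> S"
    by (simp add: of_int_eq_iff_mod)
next
  assume "c mod n \<in> S"
  moreover have "(of_int c :: 'a) = of_int (c mod n)"
    by (simp add: of_int_eq_iff_mod)
  ultimately show "(of_int c :: 'a) \<in> of_int ` S"
    by blast
qed

lemma card_overlap_of_int_image:
  assumes "S \<subseteq> {0..<n}"
  shows "card {x \<in> (of_int ` S :: 'a set). x - of_int k \<in> of_int ` S} =
    card {a \<in> S. (a - k) mod n \<in> S}"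
proof -
  have inj: "inj_on (of_int :: int \<Rightarrow> 'a) {a \<in> S. (a - k) mod n \<in> S}"
    using assms by (blast intro: inj_on_subset[OF inj_on_of_int])
  have "{x \<in> (of_int ` S :: 'a set). x - of_int k \<in> of_int ` S} =
      of_int ` {a \<in> S. (of_int a - of_int k :: 'a) \<in> of_int ` S}"
    by blast
  also have "\<dots> = of_int ` {a \<in> S. (a - k) mod n \<in> S}"
    by (simp only: of_int_mem_image_iff[OF assms] flip: of_int_diff)
  finally show ?thesis
    using inj by (simp add: card_image)
qed

end

lemma is_PDF_of_int_images:
  fixes Ss :: "int set list"
  defines "n \<equiv> int CARD('a::finite bit0)"
  assumes cards: "map card Ss = ks"
    and disjoint: "\<forall>i < length Ss. \<forall>j < length Ss. i \<noteq> j \<longrightarrow> Ss ! i \<inter> Ss ! j = {}"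
    and cover: "\<Union> (set Ss) = {0..<n}"
    and diffs: "\<forall>k \<in> {1..<n}. (\<Sum>S\<leftarrow>Ss. card {a \<in> S. (a - k) mod n \<in> S}) = lam"
  shows "is_PDF (map (image of_int) Ss :: 'a bit0 set list) ks lam"
proof -
  let ?Bs = "map (image of_int) Ss :: 'a bit0 set list"
  have inj: "inj_on (of_int :: int \<Rightarrow> 'a bit0) {0..<n}"
    unfolding n_def by (rule bit0.inj_on_of_int)
  have univ: "(of_int ` {0..<n} :: 'a bit0 set) = UNIV"
    unfolding n_def by (rule bit0.of_int_image_eq_UNIV)
  have residues: "S \<subseteq> {0..<n}" if "S \<in> set Ss" for S
    using that cover by blast
  have "card (?Bs ! i) = ks ! i" if "i < length Ss" for i
  proof -
    have "Ss ! i \<subseteq> {0..<n}"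
      using that by (simp add: residues)
    then have "inj_on (of_int :: int \<Rightarrow> 'a bit0) (Ss ! i)"
      by (rule inj_on_subset[OF inj])
    then show ?thesis
      using that cards by (auto simp: card_image)
  qed
  moreover have "?Bs ! i \<inter> ?Bs ! j = {}" if "i < length Ss" "j < length Ss" "i \<noteq> j" for i j
  proof -
    have "?Bs ! i \<inter> ?Bs ! j = of_int ` (Ss ! i \<inter> Ss ! j)"
      using that(1,2) residues by (simp add: inj_on_image_Int[OF inj])
    with that disjoint show ?thesis
      by simp
  qed
  moreover have "\<Union> (set ?Bs) = UNIV"
    using cover univ by (simp flip: image_Union)
  moreover have "count (family_diff ?Bs) g = lam" if "g \<noteq> 0" for g
  proof -
    obtain k where g: "g = of_int k" and "0 \<le> k" "k < n"
      unfolding n_def by (rule bit0.cases)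
    with that have "k \<in> {1..<n}"
      by (cases "k = 0") auto
    have "count (family_diff ?Bs) g =
        (\<Sum>S\<leftarrow>Ss. card {x \<in> (of_int ` S :: 'a bit0 set). x - g \<in> of_int ` S})"
      using that by (simp add: count_family_diff count_diff_mset comp_def)
    also have "\<dots> = (\<Sum>S\<leftarrow>Ss. card {a \<in> S. (a - k) mod n \<in> S})"
      unfolding g n_def using residues[unfolded n_def]
      by (intro arg_cong[where f = sum_list] map_cong refl bit0.card_overlap_of_int_image)
    also have "\<dots> = lam"
      using diffs \<open>k \<in> {1..<n}\<close> by blast
    finally show ?thesis .
  qed
  ultimately show ?thesis
    unfolding is_PDF_def using cards by auto
qed

theorem mainTheorem12:
  shows "\<exists>Bs :: 40 set list. is_Hadamard_PDF Bs [1, 3, 9, 27] 20"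
proof -
  let ?Ss = "[{0}, {10, 20, 30}, {1, 2, 9, 13, 15, 16, 18, 24, 37},
    {3, 4, 5, 6, 7, 8, 11, 12, 14, 17, 19, 21, 22, 23, 25, 26, 27, 28, 29, 31, 32, 33, 34, 35,
     36, 38, 39}] :: int set list"
  have "is_PDF (map (image of_int) ?Ss :: 40 set list) [1, 3, 9, 27] 20"
    by (rule is_PDF_of_int_images) (unfold card_bit0 card_bit1 card_num1, code_simp+)
  then show ?thesis
    unfolding is_Hadamard_PDF_def by auto
qed

end
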